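(* The infimum of $\operatorname{Rib}(\mathcal{U}_{w,F})$ over all folded ribbon $3$-stick unknots $\mathcal{U}_{w,F}$ (any non-degenerate triangle diagram $\mathcal{U}$, any width $w$, any folding information $F$) with ribbon linking number $\operatorname{Lk}(\mathcal{U}_{w,F})=\pm1$ equals $\sqrt{3}$, and this value is attained when $\mathcal{U}$ is an equilateral triangle.
   Context: A folded ribbon $3$-stick unknot corresponds to an unknot diagram $\mathcal{U}$ with three edges, here a non-degenerate triangle (non-collinear vertices). For width $w>0$, the corresponding folded ribbon $\mathcal{U}_{w,F}$ is a flat strip of width $w$ centred on $\mathcal{U}$ (boundary parallel to and at distance $w/2$ from each edge), folded at each vertex along a fold line through the vertex perpendicular to the bisector of the angle there; it is a piecewise-linear immersion of a Möbius band into the plane whose only singularities are the pairwise disjoint fold lines; the folding information $F$ records at each fold which of the two layers of ribbon lies on top. Folded ribbonlength: $\operatorname{Rib}(\mathcal{U}_{w,F})=\operatorname{Len}(\mathcal{U})/w$. The ribbon linking number $\operatorname{Lk}(\mathcal{U}_{w,F})$ (for an orientation of $\mathcal{U}$) is the linking number of the diagram with the boundary of the ribbon, i.e. one half the sum of the signs (right-hand rule) of the crossings between the diagram and the boundary curve. For such ribbons $\operatorname{Lk}\in\{\pm1,\pm3\}$. *)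

theory Defs
  imports "HOL-Analysis.Analysis"
begin

text \<open>
  A 3-stick unknot diagram is given by its vertices V 0, V 1, V 2 in the plane
  (modelled as complex numbers); indices are taken mod 3.  Edge i runs from
  vertex i to vertex i+1; this fixes the orientation of the diagram.
\<close>

definition vtx :: "(nat \<Rightarrow> complex) \<Rightarrow> nat \<Rightarrow> complex" where
  "vtx V i = V (i mod 3)"

definition edge_vec :: "(nat \<Rightarrow> complex) \<Rightarrow> nat \<Rightarrow> complex" where
  "edge_vec V i = vtx V (Suc i) - vtx V i"

text \<open>planar cross product (z-component)\<close>
definition cross2 :: "complex \<Rightarrow> complex \<Rightarrow> real" where
  "cross2 a b = Im (cnj a * b)"

text \<open>Direction of the fold line at vertex m: perpendicular to the bisector
  of the angle at vertex m (bisector direction = unit outgoing edge minus unit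
  incoming edge).\<close>
definition fold_dir :: "(nat \<Rightarrow> complex) \<Rightarrow> nat \<Rightarrow> complex" where
  "fold_dir V m = \<i> * (sgn (edge_vec V m) - sgn (edge_vec V (m + 2)))"

text \<open>The fold line at vertex m inside the ribbon of width w: the points of the
  fold line through vertex m at distance less than w/2 from the line of the
  outgoing edge (equivalently, by symmetry, of the incoming edge).  The segment
  is taken without its two end points on the ribbon boundary.\<close>
definition fold_segment :: "(nat \<Rightarrow> complex) \<Rightarrow> real \<Rightarrow> nat \<Rightarrow> complex set" where
  "fold_segment V w m =
     {vtx V m + of_real t * fold_dir V m | t.
        \<bar>cross2 (sgn (edge_vec V m)) (of_real t * fold_dir V m)\<bar> < w / 2}"

definition folded_ribbon_3stick :: "(nat \<Rightarrow> complex) \<Rightarrow> real \<Rightarrow> bool" where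
  "folded_ribbon_3stick V w \<longleftrightarrow>
     \<not> collinear {V 0, V 1, V 2} \<and> 0 < w \<and>
     (\<forall>i<3. \<forall>j<3. i \<noteq> j \<longrightarrow> fold_segment V w i \<inter> fold_segment V w j = {})"

definition crossing_sign :: "complex \<Rightarrow> complex \<Rightarrow> real" where
  "crossing_sign ov un = sgn (cross2 ov un)"

text \<open>Folding information F: F m holds iff at the fold at vertex m the layer of
  the outgoing edge m lies on top of the layer of the incoming edge m-1.
  At the fold at vertex m the diagram crosses the ribbon boundary twice:
  the centre line of the outgoing edge crosses the (parallel, equally oriented)
  boundary of the incoming strip, and the centre line of the incoming edge
  crosses the boundary of the outgoing strip.\<close>
definition ribbon_Lk :: "(nat \<Rightarrow> complex) \<Rightarrow> (nat \<Rightarrow> bool) \<Rightarrow> real" where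
  "ribbon_Lk V F = (1/2) * (\<Sum>m<3.
      (let out = edge_vec V m; inc = edge_vec V (m + 2) in
        \<comment> \<open>centre line of outgoing edge vs boundary of incoming strip\<close>
        (if F m then crossing_sign out inc else crossing_sign inc out)
        \<comment> \<open>centre line of incoming edge vs boundary of outgoing strip\<close>
      + (if F m then crossing_sign out inc else crossing_sign inc out)))"

definition ribbonlength :: "(nat \<Rightarrow> complex) \<Rightarrow> real \<Rightarrow> real" where
  "ribbonlength V w =
     (cmod (edge_vec V 0) + cmod (edge_vec V 1) + cmod (edge_vec V 2)) / w"

end

theory Submission
  imports Defs
begin

(* The fold line at a vertex is the external bisector of the angle there: the locus of
   points whose signed distances to the two edge lines through the vertex are opposite.
   Hence the fold lines at the two ends of an edge meet exactly at the centre of the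
   excircle tangent to that edge, at distance r (the exradius) from the edge line, and
   this point lies inside the ribbon iff r < w/2.  So the folds are pairwise disjoint iff
   w <= 2 r for all three exradii.  By Heron's formula r_a r_b r_c = s * Area (s the
   semiperimeter), and AM-GM gives Area <= s^2 / (3 sqrt 3); thus w^3 <= 8 s^3 / (3 sqrt 3),
   i.e. Rib = 2 s / w >= sqrt 3, with equality for the equilateral triangle and w = sqrt 3
   times its side.  The folding information does not enter the bound, and reversing a
   single fold gives Lk = +-1. *)

lemma cross2_components: "cross2 a b = Re a * Im b - Im a * Re b"
  by (simp add: cross2_def)

lemma cross2_eq_0_iff_parallel:
  assumes "d \<noteq> 0"
  shows "cross2 d q = 0 \<longleftrightarrow> (\<exists>t. q = of_real t * d)"
proof
  assume "cross2 d q = 0"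
  then have "cnj d * q = of_real (Re (cnj d * q))"
    by (simp add: cross2_def complex_eq_iff)
  then have "of_real ((cmod d)\<^sup>2) * q = of_real (Re (cnj d * q)) * d"
    by (metis complex_norm_square mult.assoc mult.commute)
  then have "q = of_real (Re (cnj d * q) / (cmod d)\<^sup>2) * d"
    using assms by (simp add: field_simps)
  then show "\<exists>t. q = of_real t * d" ..
qed (auto simp: cross2_components)

lemma collinear_iff_cross2: "collinear {A, B, C} \<longleftrightarrow> cross2 (B - A) (C - B) = 0"
proof -
  have "collinear {A, B, C} \<longleftrightarrow> collinear {0, A - B, C - B}"
    by (auto simp add: collinear_def)
  also have "\<dots> \<longleftrightarrow> A - B = 0 \<or> C - B = 0 \<or> (\<exists>c. C - B = of_real c * (A - B))"
    by (simp add: collinear_lemma scaleR_conv_of_real)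
  also have "\<dots> \<longleftrightarrow> cross2 (A - B) (C - B) = 0"
    by (cases "A = B") (force simp: cross2_components, force simp: cross2_eq_0_iff_parallel)
  also have "\<dots> \<longleftrightarrow> cross2 (B - A) (C - B) = 0"
    by (auto simp: cross2_components algebra_simps)
  finally show ?thesis .
qed

lemma cross2_sgn: "cross2 (sgn a) (sgn b) = cross2 a b / (cmod a * cmod b)"
  by (simp add: sgn_div_norm cross2_components divide_simps)

lemma cross2_add_left: "cross2 (a + b) c = cross2 a c + cross2 b c"
  by (simp add: cross2_components algebra_simps)

lemma cross2_add_right: "cross2 a (b + c) = cross2 a b + cross2 a c"
  by (simp add: cross2_components algebra_simps)

lemma cross2_of_real_mult_left: "cross2 (of_real k * a) b = k * cross2 a b"
  by (simp add: cross2_components algebra_simps)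

lemma cross2_swap: "cross2 b a = - cross2 a b"
  by (simp add: cross2_components)

lemma fold_line_iff:
  assumes u: "cmod u = 1" and v: "cmod v = 1" and uv: "cross2 u v \<noteq> 0"
  shows "(\<exists>t. q = of_real t * (\<i> * (u - v))) \<longleftrightarrow> cross2 u q + cross2 v q = 0"
proof -
  have "u + v \<noteq> 0" "\<i> * (u - v) \<noteq> 0"
    using uv by (auto simp: cross2_components add_eq_0_iff)
  have "cross2 (\<i> * (u - v)) (u + v) = ((Re v)\<^sup>2 + (Im v)\<^sup>2) - ((Re u)\<^sup>2 + (Im u)\<^sup>2)"
    by (simp add: cross2_components algebra_simps power2_eq_square)
  also have "\<dots> = 0"
    using u v by (simp flip: cmod_power2)
  finally obtain k where k: "u + v = of_real k * (\<i> * (u - v))"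
    using cross2_eq_0_iff_parallel[OF \<open>\<i> * (u - v) \<noteq> 0\<close>] by blast
  with \<open>u + v \<noteq> 0\<close> have "k \<noteq> 0" by auto
  have "cross2 u q + cross2 v q = k * cross2 (\<i> * (u - v)) q"
    by (simp add: k flip: cross2_add_left cross2_of_real_mult_left)
  then show ?thesis
    using cross2_eq_0_iff_parallel[OF \<open>\<i> * (u - v) \<noteq> 0\<close>] \<open>k \<noteq> 0\<close> by simp
qed

lemma norm_sub_lt_of_not_collinear:
  fixes A B C :: "'a::euclidean_space"
  assumes "\<not> collinear {A, B, C}"
  shows "norm (B - A) < norm (C - B) + norm (A - C)"
proof -
  have "dist A B \<le> dist A C + dist C B" by (rule dist_triangle)
  moreover have "dist A B \<noteq> dist A C + dist C B"
    using assms between_imp_collinear[of A B C] by (auto simp: between insert_commute)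
  ultimately show ?thesis
    by (simp add: dist_norm norm_minus_commute)
qed

definition signed_dist :: "complex \<Rightarrow> complex \<Rightarrow> complex \<Rightarrow> real" where
  "signed_dist A B P = cross2 (sgn (B - A)) (P - A)"

lemma signed_dist_at_end: "signed_dist A B P = cross2 (sgn (B - A)) (P - B)"
proof -
  have "cross2 (sgn (B - A)) (P - A) = cross2 (sgn (B - A)) (P - B) + cross2 (sgn (B - A)) (B - A)"
    using cross2_add_right[of "sgn (B - A)" "P - B" "B - A"] by simp
  moreover have "cross2 (sgn (B - A)) (B - A) = 0"
    by (simp add: sgn_div_norm cross2_components algebra_simps)
  ultimately show ?thesis
    by (simp add: signed_dist_def)
qed

lemma norm_mult_signed_dist: "cmod (B - A) * signed_dist A B P = cross2 (B - A) (P - A)"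
  by (cases "A = B") (simp_all add: signed_dist_def sgn_div_norm cross2_components field_simps)

lemma signed_dist_area_identity:
  "cmod (B - A) * signed_dist A B P + cmod (C - B) * signed_dist B C P
     + cmod (A - C) * signed_dist C A P = cross2 (B - A) (C - B)"
  unfolding norm_mult_signed_dist by (simp add: cross2_components algebra_simps)

lemma signed_dists_solvable:
  assumes "cross2 (B - A) (C - B) \<noteq> 0"
  shows "\<exists>P. signed_dist A B P = \<alpha> \<and> signed_dist B C P = \<beta>"
proof -
  define u v where "u = sgn (B - A)" and "v = sgn (C - B)"
  define k where "k = cross2 u v"
  have "B \<noteq> A" "C \<noteq> B"
    using assms by (auto simp: cross2_def)
  with assms have "k \<noteq> 0"
    by (simp add: k_def u_def v_def cross2_sgn)
  define P where "P = B + (of_real (\<alpha> / k) * v - of_real (\<beta> / k) * u)"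
  have "signed_dist A B P = cross2 u (P - B)"
    by (simp add: signed_dist_at_end u_def)
  also have "\<dots> = \<alpha> / k * cross2 u v"
    by (simp add: P_def cross2_components algebra_simps)
  finally have "signed_dist A B P = \<alpha>"
    using \<open>k \<noteq> 0\<close> by (simp add: k_def)
  moreover have "signed_dist B C P = cross2 v (P - B)"
    by (simp add: signed_dist_def v_def)
  moreover have "\<dots> = \<beta> / k * cross2 u v"
    by (simp add: P_def cross2_components algebra_simps)
  ultimately have "signed_dist A B P = \<alpha> \<and> signed_dist B C P = \<beta>"
    using \<open>k \<noteq> 0\<close> by (simp add: k_def)
  then show ?thesis by blast
qed

definition fold_segment_at :: "complex \<Rightarrow> complex \<Rightarrow> complex \<Rightarrow> real \<Rightarrow> complex set" where
  "fold_segment_at C A B w =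
     {A + of_real t * (\<i> * (sgn (B - A) - sgn (A - C))) | t.
        \<bar>cross2 (sgn (B - A)) (of_real t * (\<i> * (sgn (B - A) - sgn (A - C))))\<bar> < w / 2}"

lemma fold_segment_at_eq:
  assumes "\<not> collinear {C, A, B}"
  shows "fold_segment_at C A B w =
           {P. signed_dist A B P + signed_dist C A P = 0 \<and> \<bar>signed_dist A B P\<bar> < w / 2}"
proof -
  define u v where "u = sgn (B - A)" and "v = sgn (A - C)"
  have "A \<noteq> B" "A \<noteq> C"
    using assms by (auto simp: collinear_2 insert_commute)
  then have "cmod u = 1" "cmod v = 1"
    by (simp_all add: u_def v_def norm_sgn)
  moreover have "cross2 u v \<noteq> 0"
    using assms \<open>A \<noteq> B\<close> \<open>A \<noteq> C\<close>
    by (auto simp: u_def v_def cross2_sgn collinear_iff_cross2 cross2_components algebra_simps)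
  ultimately have line: "(\<exists>t. P - A = of_real t * (\<i> * (u - v))) \<longleftrightarrow>
                         signed_dist A B P + signed_dist C A P = 0" for P
    unfolding signed_dist_at_end[of C A]
    by (simp add: fold_line_iff signed_dist_def flip: u_def v_def)
  have "fold_segment_at C A B w =
          {P. (\<exists>t. P - A = of_real t * (\<i> * (u - v))) \<and> \<bar>signed_dist A B P\<bar> < w / 2}"
    unfolding fold_segment_at_def signed_dist_def u_def v_def by (auto simp: diff_eq_eq add.commute)
  then show ?thesis
    by (simp add: line)
qed

lemma fold_segments_at_meet_iff:
  assumes nc: "\<not> collinear {A, B, C}"
  shows "fold_segment_at C A B w \<inter> fold_segment_at A B C w \<noteq> {} \<longleftrightarrow>
         2 * \<bar>cross2 (B - A) (C - B)\<bar> < w * (cmod (C - B) + cmod (A - C) - cmod (B - A))"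
proof -
  define D where "D = cross2 (B - A) (C - B)"
  define x where "x = cmod (C - B) + cmod (A - C) - cmod (B - A)"
  have "x > 0"
    using norm_sub_lt_of_not_collinear[OF nc] by (simp add: x_def)
  have "A \<noteq> C"
    using nc by (auto simp: collinear_2 insert_commute)
  have "\<not> collinear {C, A, B}" "\<not> collinear {A, B, C}"
    using nc by (simp_all add: insert_commute)
  then have meet: "P \<in> fold_segment_at C A B w \<inter> fold_segment_at A B C w \<longleftrightarrow>
      signed_dist B C P = - signed_dist A B P \<and> signed_dist C A P = - signed_dist A B P \<and>
      \<bar>signed_dist A B P\<bar> < w / 2" for P
    by (auto simp: fold_segment_at_eq)
  have area: "D = cmod (B - A) * signed_dist A B P + cmod (C - B) * signed_dist B C P
                    + cmod (A - C) * signed_dist C A P" for P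
    by (simp add: D_def signed_dist_area_identity)
  show ?thesis
    unfolding D_def[symmetric] x_def[symmetric]
  proof
    assume "fold_segment_at C A B w \<inter> fold_segment_at A B C w \<noteq> {}"
    then obtain P where P: "P \<in> fold_segment_at C A B w \<inter> fold_segment_at A B C w"
      by blast
    then have "signed_dist B C P = - signed_dist A B P" "signed_dist C A P = - signed_dist A B P"
      and "\<bar>signed_dist A B P\<bar> < w / 2"
      using meet by auto
    then have "D = - x * signed_dist A B P"
      using area[of P] by (simp add: x_def algebra_simps)
    then have "\<bar>D\<bar> = x * \<bar>signed_dist A B P\<bar>"
      using \<open>x > 0\<close> by (simp add: abs_mult)
    also have "\<dots> < x * (w / 2)"
      using \<open>\<bar>signed_dist A B P\<bar> < w / 2\<close> \<open>x > 0\<close> by simp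
    finally show "2 * \<bar>D\<bar> < w * x" by (simp add: mult.commute)
  next
    assume "2 * \<bar>D\<bar> < w * x"
    have "D \<noteq> 0"
      using nc by (simp add: D_def collinear_iff_cross2)
    then obtain P where P: "signed_dist A B P = - D / x" "signed_dist B C P = D / x"
      using signed_dists_solvable[of B A C] by (auto simp: D_def)
    have "cmod (A - C) * signed_dist C A P = cmod (A - C) * (D / x)"
      using area[of P] \<open>x > 0\<close> by (simp add: P x_def field_simps)
    then have "signed_dist C A P = D / x"
      using \<open>A \<noteq> C\<close> by (metis mult_cancel_left norm_eq_zero right_minus_eq)
    moreover have "\<bar>signed_dist A B P\<bar> < w / 2"
      using \<open>2 * \<bar>D\<bar> < w * x\<close> \<open>x > 0\<close> by (simp add: P abs_minus_commute field_simps)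
    ultimately have "P \<in> fold_segment_at C A B w \<inter> fold_segment_at A B C w"
      using meet by (simp add: P)
    then show "fold_segment_at C A B w \<inter> fold_segment_at A B C w \<noteq> {}"
      by blast
  qed
qed

lemma vtx_Suc3 [simp]: "vtx V (Suc (Suc (Suc m))) = vtx V m"
  unfolding vtx_def by (rule arg_cong[where f = V]) presburger

lemma edge_vec_Suc3 [simp]: "edge_vec V (Suc (Suc (Suc m))) = edge_vec V m"
  by (simp add: edge_vec_def)

lemma edge_vec_Suc2: "edge_vec V (Suc (Suc m)) = vtx V m - vtx V (Suc (Suc m))"
  by (simp add: edge_vec_def)

lemma vtx_triple: "{vtx V m, vtx V (Suc m), vtx V (Suc (Suc m))} = {V 0, V 1, V 2}"
proof -
  consider "m mod 3 = 0" | "m mod 3 = 1" | "m mod 3 = 2"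
    by linarith
  then show ?thesis
  proof cases
    case 1
    then have "Suc m mod 3 = 1" "Suc (Suc m) mod 3 = 2" by presburger+
    with 1 show ?thesis by (simp add: vtx_def)
  next
    case 2
    then have "Suc m mod 3 = 2" "Suc (Suc m) mod 3 = 0" by presburger+
    with 2 show ?thesis by (auto simp: vtx_def)
  next
    case 3
    then have "Suc m mod 3 = 0" "Suc (Suc m) mod 3 = 1" by presburger+
    with 3 show ?thesis by (auto simp: vtx_def)
  qed
qed

lemma edge_vec_012:
  "edge_vec V 0 = V 1 - V 0" "edge_vec V 1 = V 2 - V 1" "edge_vec V 2 = V 0 - V 2"
  by (simp_all add: edge_vec_def vtx_def numeral_2_eq_2)

lemma edge_vec_mod3: "edge_vec V m = edge_vec V (m mod 3)"
  by (simp add: edge_vec_def vtx_def mod_Suc_eq)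

lemma cross2_edge_vec_Suc:
  "cross2 (edge_vec V m) (edge_vec V (Suc m)) = cross2 (edge_vec V 0) (edge_vec V 1)"
proof -
  have "cross2 (edge_vec V m) (edge_vec V (Suc m)) =
        cross2 (edge_vec V (m mod 3)) (edge_vec V (Suc (m mod 3)))"
    by (metis edge_vec_mod3 mod_Suc_eq)
  moreover have "m mod 3 = 0 \<or> m mod 3 = 1 \<or> m mod 3 = 2"
    by linarith
  ultimately show ?thesis
    by (elim disjE)
      (simp_all add: edge_vec_def vtx_def numeral_2_eq_2 cross2_components algebra_simps)
qed

lemma fold_segment_eq_fold_segment_at:
  "fold_segment V w m = fold_segment_at (vtx V (Suc (Suc m))) (vtx V m) (vtx V (Suc m)) w"
  unfolding fold_segment_def fold_segment_at_def fold_dir_def edge_vec_Suc2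
  by (simp add: edge_vec_def)

lemma fold_segment_Suc3 [simp]: "fold_segment V w (Suc (Suc (Suc m))) = fold_segment V w m"
  by (simp add: fold_segment_eq_fold_segment_at)

lemma fold_segments_disjoint_iff:
  assumes "\<not> collinear {V 0, V 1, V 2}"
  shows "fold_segment V w m \<inter> fold_segment V w (Suc m) = {} \<longleftrightarrow>
         w * (cmod (edge_vec V (Suc m)) + cmod (edge_vec V (Suc (Suc m))) - cmod (edge_vec V m))
           \<le> 2 * \<bar>cross2 (edge_vec V 0) (edge_vec V 1)\<bar>"
proof -
  define A B C where "A = vtx V m" and "B = vtx V (Suc m)" and "C = vtx V (Suc (Suc m))"
  have "\<not> collinear {A, B, C}"
    using assms vtx_triple[of V m] by (simp add: A_def B_def C_def)
  moreover have "fold_segment V w m = fold_segment_at C A B w"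
    "fold_segment V w (Suc m) = fold_segment_at A B C w"
    by (simp_all add: fold_segment_eq_fold_segment_at A_def B_def C_def)
  moreover have "edge_vec V m = B - A" "edge_vec V (Suc m) = C - B"
    "edge_vec V (Suc (Suc m)) = A - C"
    by (simp_all add: edge_vec_def edge_vec_Suc2 A_def B_def C_def)
  moreover have "cross2 (B - A) (C - B) = cross2 (edge_vec V 0) (edge_vec V 1)"
    using cross2_edge_vec_Suc[of V m] calculation(4,5) by simp
  ultimately show ?thesis
    using fold_segments_at_meet_iff[of A B C w] by (metis not_less)
qed

lemma all_less_3_iff: "(\<forall>i<3. P i) \<longleftrightarrow> P 0 \<and> P 1 \<and> P (2::nat)"
proof
  assume "P 0 \<and> P 1 \<and> P 2"
  moreover have "i = 0 \<or> i = 1 \<or> i = 2" if "i < 3" for i :: nat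
    using that by linarith
  ultimately show "\<forall>i<3. P i"
    by blast
qed auto

lemma pairwise_disjoint_3_iff:
  "(\<forall>i<3. \<forall>j<3. i \<noteq> j \<longrightarrow> S i \<inter> S j = {}) \<longleftrightarrow>
     S 0 \<inter> S 1 = {} \<and> S 1 \<inter> S 2 = {} \<and> S 2 \<inter> S (0::nat) = {}"
  unfolding all_less_3_iff by (auto simp: Int_commute)

lemma edge_length_lt:
  assumes "\<not> collinear {V 0, V 1, V 2}"
  shows "cmod (edge_vec V m) < cmod (edge_vec V (Suc m)) + cmod (edge_vec V (Suc (Suc m)))"
  using norm_sub_lt_of_not_collinear[of "vtx V m" "vtx V (Suc m)" "vtx V (Suc (Suc m))"]
    assms vtx_triple[of V m]
  by (simp add: edge_vec_def)

lemma edge_vec_3_4: "edge_vec V 3 = edge_vec V 0" "edge_vec V 4 = edge_vec V 1"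
  using edge_vec_Suc3[of V 0] edge_vec_Suc3[of V 1] by (simp_all add: numeral_eq_Suc)

(* The excircle tangent to edge m is centred where the fold lines at the two ends of edge m meet. *)
definition exradius :: "(nat \<Rightarrow> complex) \<Rightarrow> nat \<Rightarrow> real" where
  "exradius V m = \<bar>cross2 (edge_vec V 0) (edge_vec V 1)\<bar> /
     (cmod (edge_vec V (Suc m)) + cmod (edge_vec V (Suc (Suc m))) - cmod (edge_vec V m))"

lemma le_2_exradius_iff:
  assumes "\<not> collinear {V 0, V 1, V 2}"
  shows "w \<le> 2 * exradius V m \<longleftrightarrow>
         w * (cmod (edge_vec V (Suc m)) + cmod (edge_vec V (Suc (Suc m))) - cmod (edge_vec V m))
           \<le> 2 * \<bar>cross2 (edge_vec V 0) (edge_vec V 1)\<bar>"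
  using edge_length_lt[OF assms, of m] by (simp add: exradius_def pos_le_divide_eq)

lemma folded_ribbon_3stick_iff:
  "folded_ribbon_3stick V w \<longleftrightarrow>
     \<not> collinear {V 0, V 1, V 2} \<and> 0 < w \<and> (\<forall>m<3. w \<le> 2 * exradius V m)"
proof (cases "collinear {V 0, V 1, V 2}")
  case False
  have S: "fold_segment V w (Suc 0) = fold_segment V w 1"
    "fold_segment V w (Suc 1) = fold_segment V w 2" "fold_segment V w (Suc 2) = fold_segment V w 0"
    using fold_segment_Suc3[of V w 0] by (simp_all add: numeral_eq_Suc)
  have disj: "fold_segment V w m \<inter> fold_segment V w (Suc m) = {} \<longleftrightarrow> w \<le> 2 * exradius V m"
    for m
    using fold_segments_disjoint_iff[OF False] le_2_exradius_iff[OF False] by simp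
  show ?thesis
    unfolding folded_ribbon_3stick_def pairwise_disjoint_3_iff
    unfolding all_less_3_iff
    using False disj[of 0, unfolded S] disj[of 1, unfolded S] disj[of 2, unfolded S] by simp
qed (simp add: folded_ribbon_3stick_def)

lemma heron_cross2:
  "4 * (cross2 p q)\<^sup>2 = (cmod p + cmod q + cmod (p + q)) * (cmod q + cmod (p + q) - cmod p)
      * (cmod (p + q) + cmod p - cmod q) * (cmod p + cmod q - cmod (p + q))"
proof -
  define a b c where "a = cmod p" and "b = cmod q" and "c = cmod (p + q)"
  have "(a + b + c) * (b + c - a) * (c + a - b) * (a + b - c)
      = 2 * a\<^sup>2 * b\<^sup>2 + 2 * b\<^sup>2 * c\<^sup>2 + 2 * c\<^sup>2 * a\<^sup>2 - (a\<^sup>2)\<^sup>2 - (b\<^sup>2)\<^sup>2 - (c\<^sup>2)\<^sup>2"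
    by (simp add: power2_eq_square algebra_simps)
  also have "\<dots> = 4 * (cross2 p q)\<^sup>2"
    unfolding a_def b_def c_def cmod_power2 cross2_components
    by (simp add: power2_eq_square algebra_simps)
  finally show ?thesis
    by (simp add: a_def b_def c_def)
qed

lemma heron_edge_vec:
  "4 * (cross2 (edge_vec V 0) (edge_vec V 1))\<^sup>2 =
     (cmod (edge_vec V 0) + cmod (edge_vec V 1) + cmod (edge_vec V 2))
     * (cmod (edge_vec V 1) + cmod (edge_vec V 2) - cmod (edge_vec V 0))
     * (cmod (edge_vec V 2) + cmod (edge_vec V 0) - cmod (edge_vec V 1))
     * (cmod (edge_vec V 0) + cmod (edge_vec V 1) - cmod (edge_vec V 2))"
proof -
  have "cmod (edge_vec V 0 + edge_vec V 1) = cmod (edge_vec V 2)"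
    unfolding edge_vec_012 by (simp add: norm_minus_commute)
  then show ?thesis
    using heron_cross2[of "edge_vec V 0" "edge_vec V 1"] by simp
qed

lemma cube_sum_ge_27_mult:
  fixes x y z :: real
  assumes "x \<ge> 0" "y \<ge> 0" "z \<ge> 0"
  shows "27 * (x * y * z) \<le> (x + y + z) ^ 3"
proof -
  define P where "P = (x + y + z) * ((x - y)\<^sup>2 + (y - z)\<^sup>2 + (z - x)\<^sup>2)"
  define Q where "Q = x * (y - z)\<^sup>2 + y * (z - x)\<^sup>2 + z * (x - y)\<^sup>2"
  have "2 * ((x + y + z) ^ 3 - 27 * (x * y * z)) = P + 6 * Q"
    by (simp add: P_def Q_def power2_eq_square power3_eq_cube algebra_simps)
  moreover have "P \<ge> 0" "Q \<ge> 0"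
    using assms by (simp_all add: P_def Q_def)
  ultimately have "0 \<le> 2 * ((x + y + z) ^ 3 - 27 * (x * y * z))"
    by simp
  then show ?thesis
    by simp
qed

(* x, y, z stand for b + c - a, c + a - b, a + b - c and d for twice the area, so that
   d / x, d / y, d / z are the exradii. *)
lemma sqrt3_mult_le_sum:
  fixes w x y z d :: real
  assumes "w > 0" "x > 0" "y > 0" "z > 0"
    and hx: "w * x \<le> 2 * d" and hy: "w * y \<le> 2 * d" and hz: "w * z \<le> 2 * d"
    and heron: "4 * d\<^sup>2 = (x + y + z) * x * y * z"
  shows "sqrt 3 * w \<le> x + y + z"
proof -
  define L where "L = x + y + z"
  have heron_L: "4 * d\<^sup>2 = L * (x * y * z)"
    using heron by (simp add: L_def algebra_simps)
  have "L > 0"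
    using assms by (simp add: L_def)
  have "0 < w * x"
    using assms by simp
  then have "d \<ge> 0"
    using hx by linarith
  have "(w * x) * (w * y) \<le> (2 * d) * (2 * d)"
    by (rule mult_mono[OF hx hy]) (use assms \<open>d \<ge> 0\<close> in auto)
  then have "(w * x) * (w * y) * (w * z) \<le> (2 * d) * (2 * d) * (2 * d)"
    by (rule mult_mono[OF _ hz]) (use assms \<open>d \<ge> 0\<close> in auto)
  also have "\<dots> = 2 * d * (4 * d\<^sup>2)"
    by (simp add: power2_eq_square)
  finally have "w ^ 3 * (x * y * z) \<le> 2 * d * L * (x * y * z)"
    by (simp add: heron_L power3_eq_cube algebra_simps)
  then have "w ^ 3 \<le> 2 * d * L"
    using assms by simp
  then have "(w ^ 3)\<^sup>2 \<le> (2 * d * L)\<^sup>2"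
    using \<open>w > 0\<close> by (intro power_mono) auto
  also have "\<dots> = 4 * d\<^sup>2 * L\<^sup>2"
    by (simp add: power_mult_distrib)
  also have "\<dots> = L ^ 3 * (x * y * z)"
    unfolding heron_L by (simp add: power2_eq_square power3_eq_cube)
  finally have "27 * (w ^ 3)\<^sup>2 \<le> L ^ 3 * (27 * (x * y * z))"
    by simp
  also have "\<dots> \<le> L ^ 3 * L ^ 3"
    using cube_sum_ge_27_mult[of x y z] assms \<open>L > 0\<close> by (intro mult_left_mono) (auto simp: L_def)
  finally have "(3 * w\<^sup>2) ^ 3 \<le> (L\<^sup>2) ^ 3"
    by (simp add: power2_eq_square power3_eq_cube algebra_simps)
  then have "3 * w\<^sup>2 \<le> L\<^sup>2"
    using power_mono_iff[of "3 * w\<^sup>2" "L\<^sup>2" 3] by simp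
  then have "(sqrt 3 * w)\<^sup>2 \<le> L\<^sup>2"
    by (simp add: power_mult_distrib)
  then have "sqrt 3 * w \<le> L"
    by (rule power2_le_imp_le) (use \<open>L > 0\<close> in simp)
  then show ?thesis
    by (simp add: L_def)
qed

theorem sqrt3_le_ribbonlength:
  assumes "folded_ribbon_3stick V w"
  shows "sqrt 3 \<le> ribbonlength V w"
proof -
  define a b c where "a = cmod (edge_vec V 0)" and "b = cmod (edge_vec V 1)"
    and "c = cmod (edge_vec V 2)"
  define d where "d = \<bar>cross2 (edge_vec V 0) (edge_vec V 1)\<bar>"
  have nc: "\<not> collinear {V 0, V 1, V 2}" and "w > 0"
    and "\<forall>m<3. w \<le> 2 * exradius V m"
    using assms by (simp_all add: folded_ribbon_3stick_iff)
  then have "w * (b + c - a) \<le> 2 * d" "w * (c + a - b) \<le> 2 * d" "w * (a + b - c) \<le> 2 * d"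
    unfolding all_less_3_iff le_2_exradius_iff[OF nc]
    by (simp_all add: a_def b_def c_def d_def edge_vec_3_4 numeral_2_eq_2)
  moreover have "b + c - a > 0" "c + a - b > 0" "a + b - c > 0"
    using edge_length_lt[OF nc, of 0] edge_length_lt[OF nc, of 1] edge_length_lt[OF nc, of 2]
    by (simp_all add: a_def b_def c_def edge_vec_3_4 numeral_2_eq_2)
  moreover have "4 * d\<^sup>2 = ((b + c - a) + (c + a - b) + (a + b - c)) * (b + c - a) * (c + a - b) * (a + b - c)"
    using heron_edge_vec[of V] by (simp add: a_def b_def c_def d_def algebra_simps)
  ultimately have "sqrt 3 * w \<le> (b + c - a) + (c + a - b) + (a + b - c)"
    using \<open>w > 0\<close> by (intro sqrt3_mult_le_sum) auto
  then show ?thesis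
    using \<open>w > 0\<close> by (simp add: ribbonlength_def a_def b_def c_def field_simps)
qed

lemma ribbon_Lk_eq:
  "ribbon_Lk V F =
     sgn (cross2 (edge_vec V 0) (edge_vec V 1)) * (\<Sum>m<3. if F m then - 1 else 1)"
proof -
  define s where "s = sgn (cross2 (edge_vec V 0) (edge_vec V 1))"
  have "cross2 (edge_vec V (m + 2)) (edge_vec V m) = cross2 (edge_vec V 0) (edge_vec V 1)" for m
    using cross2_edge_vec_Suc[of V "m + 2"] by simp
  then have signs: "crossing_sign (edge_vec V m) (edge_vec V (m + 2)) = - s"
    "crossing_sign (edge_vec V (m + 2)) (edge_vec V m) = s" for m
    using cross2_swap[of "edge_vec V (m + 2)" "edge_vec V m"]
    by (simp_all add: crossing_sign_def s_def sgn_minus)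
  have "ribbon_Lk V F = (\<Sum>m<3. if F m then - s else s)"
    unfolding ribbon_Lk_def Let_def signs by (simp add: sum_distrib_left[symmetric])
  also have "\<dots> = s * (\<Sum>m<3. if F m then - 1 else 1)"
    unfolding sum_distrib_left by (rule sum.cong) auto
  finally show ?thesis
    by (simp add: s_def)
qed

lemma equilateral_ribbonlength_sqrt3:
  assumes nc: "\<not> collinear {V 0, V 1, V 2}"
    and eq: "cmod (edge_vec V 1) = cmod (edge_vec V 0)" "cmod (edge_vec V 2) = cmod (edge_vec V 0)"
  defines "w \<equiv> sqrt 3 * cmod (edge_vec V 0)"
  shows "folded_ribbon_3stick V w" and "ribbonlength V w = sqrt 3"
proof -
  define s where "s = cmod (edge_vec V 0)"
  have "s > 0"
    using nc by (auto simp: s_def edge_vec_012)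
  have len: "cmod (edge_vec V m) = s" for m
  proof -
    have "m mod 3 = 0 \<or> m mod 3 = 1 \<or> m mod 3 = 2"
      by linarith
    then show ?thesis
      using eq by (subst edge_vec_mod3) (auto simp: s_def)
  qed
  have "(2 * \<bar>cross2 (edge_vec V 0) (edge_vec V 1)\<bar>)\<^sup>2 = (sqrt 3 * s\<^sup>2)\<^sup>2"
    using heron_edge_vec[of V] by (simp add: len power_mult_distrib power2_eq_square)
  then have "2 * \<bar>cross2 (edge_vec V 0) (edge_vec V 1)\<bar> = w * s"
    using \<open>s > 0\<close> by (subst (asm) power2_eq_iff_nonneg) (auto simp: w_def s_def power2_eq_square)
  then have "w \<le> 2 * exradius V m" for m
    by (simp add: le_2_exradius_iff[OF nc] len)
  then show "folded_ribbon_3stick V w"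
    using nc \<open>s > 0\<close> by (simp add: folded_ribbon_3stick_iff w_def s_def)
  have "ribbonlength V w = 3 * s / (sqrt 3 * s)"
    by (simp add: ribbonlength_def len w_def)
  also have "\<dots> = 3 / sqrt 3"
    using \<open>s > 0\<close> by simp
  also have "\<dots> = sqrt 3"
    by (simp add: real_div_sqrt)
  finally show "ribbonlength V w = sqrt 3" .
qed

lemma abs_ribbon_Lk_single_fold:
  assumes "\<not> collinear {V 0, V 1, V 2}"
  shows "\<bar>ribbon_Lk V (\<lambda>m. m = 0)\<bar> = 1"
proof -
  have "cross2 (edge_vec V 0) (edge_vec V 1) \<noteq> 0"
    using assms unfolding edge_vec_012 collinear_iff_cross2 .
  moreover have "(\<Sum>m<3::nat. if m = 0 then - 1 else 1 :: real) = 1"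
    by (simp add: numeral_3_eq_3)
  ultimately show ?thesis
    by (simp add: ribbon_Lk_eq abs_sgn_eq)
qed

lemma equilateral_triangle_exists:
  "\<exists>V :: nat \<Rightarrow> complex. \<not> collinear {V 0, V 1, V 2} \<and>
     dist (V 0) (V 1) = dist (V 1) (V 2) \<and> dist (V 1) (V 2) = dist (V 2) (V 0)"
proof -
  define V :: "nat \<Rightarrow> complex" where
    "V n = (if n = 0 then 0 else if n = 1 then 1 else Complex (1 / 2) (sqrt 3 / 2))" for n
  have "(1 / 2 :: real)\<^sup>2 + (sqrt 3 / 2)\<^sup>2 = 1"
    by (simp add: power_divide)
  then have "dist (V 0) (V 1) = 1" "dist (V 1) (V 2) = 1" "dist (V 2) (V 0) = 1"
    by (simp_all add: V_def dist_norm cmod_def power2_eq_square)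
  moreover have "\<not> collinear {V 0, V 1, V 2}"
    by (simp add: V_def collinear_iff_cross2 cross2_components)
  ultimately show ?thesis
    by auto
qed

lemma equilateral_attains_sqrt3:
  fixes V :: "nat \<Rightarrow> complex"
  assumes nc: "\<not> collinear {V 0, V 1, V 2}"
    and "dist (V 0) (V 1) = dist (V 1) (V 2)" "dist (V 1) (V 2) = dist (V 2) (V 0)"
  shows "\<exists>w F. folded_ribbon_3stick V w \<and> \<bar>ribbon_Lk V F\<bar> = 1 \<and> ribbonlength V w = sqrt 3"
proof -
  have "cmod (edge_vec V 1) = cmod (edge_vec V 0)" "cmod (edge_vec V 2) = cmod (edge_vec V 0)"
    using assms(2,3) unfolding edge_vec_012 dist_norm by (simp_all add: norm_minus_commute)
  then show ?thesis
    using equilateral_ribbonlength_sqrt3[OF nc] abs_ribbon_Lk_single_fold[OF nc] by blast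
qed

lemma Inf_ribbonlength_Lk_pm1:
  "Inf {ribbonlength V w | (V :: nat \<Rightarrow> complex) w (F :: nat \<Rightarrow> bool).
          folded_ribbon_3stick V w \<and> \<bar>ribbon_Lk V F\<bar> = 1} = sqrt 3"
proof (rule cInf_eq_minimum)
  obtain V :: "nat \<Rightarrow> complex" where "\<not> collinear {V 0, V 1, V 2}"
    "dist (V 0) (V 1) = dist (V 1) (V 2)" "dist (V 1) (V 2) = dist (V 2) (V 0)"
    using equilateral_triangle_exists by blast
  then obtain w F where "folded_ribbon_3stick V w" "\<bar>ribbon_Lk V F\<bar> = 1"
    and length: "ribbonlength V w = sqrt 3"
    using equilateral_attains_sqrt3 by blast
  then show "sqrt 3 \<in> {ribbonlength V w | (V :: nat \<Rightarrow> complex) w (F :: nat \<Rightarrow> bool).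
          folded_ribbon_3stick V w \<and> \<bar>ribbon_Lk V F\<bar> = 1}"
    unfolding length[symmetric] by blast
qed (auto intro: sqrt3_le_ribbonlength)

theorem corollary5p7:
  shows "Inf {ribbonlength V w | (V :: nat \<Rightarrow> complex) w (F :: nat \<Rightarrow> bool).
              folded_ribbon_3stick V w \<and> \<bar>ribbon_Lk V F\<bar> = 1} = sqrt 3
    \<and> (\<forall>V :: nat \<Rightarrow> complex.
          \<not> collinear {V 0, V 1, V 2} \<and> dist (V 0) (V 1) = dist (V 1) (V 2)
          \<and> dist (V 1) (V 2) = dist (V 2) (V 0) \<longrightarrow>
          (\<exists>w F. folded_ribbon_3stick V w \<and> \<bar>ribbon_Lk V F\<bar> = 1
                 \<and> ribbonlength V w = sqrt 3))"
  using Inf_ribbonlength_Lk_pm1 equilateral_attains_sqrt3 by blast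

end
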